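(* Let $a,b$ be positive integers and let $A=(a_1,\ldots,a_n)$ be a sequence of positive integers such that $a_i\in\{a,a+1\}$ for every odd $i$ and $a_i\in\{b,b+1\}$ for every even $i$. (i) If $A=(P,a,R)$ where the displayed entry $a$ sits at an odd position and $P,R$ each have length at least $2$, then $$1+\frac{1}{a+2c^{(1)}_{a,a+1;b}}\le\frac{\langle P,a+1,R\rangle}{\langle P,a,R\rangle}\le 1+\frac{1}{a+2c^{(2)}_{a,a+1;b}}.$$ (ii) If $A=(P_1,b,R_1)$ where the displayed entry $b$ sits at an even position and $P_1,R_1$ each have length at least $2$, then $$1+\frac{1}{b+2c^{(1)}_{a;b,b+1}}\le\frac{\langle P_1,b+1,R_1\rangle}{\langle P_1,b,R_1\rangle}\le 1+\frac{1}{b+2c^{(2)}_{a;b,b+1}}.$$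
   Context: The continuant $\langle a_1,\ldots,a_n\rangle$ is defined by $\langle\,\rangle=1$, $\langle a_1\rangle=a_1$, $\langle a_1,\ldots,a_n\rangle=a_n\langle a_1,\ldots,a_{n-1}\rangle+\langle a_1,\ldots,a_{n-2}\rangle$; lists inside $\langle\cdot\rangle$ denote concatenation. $[x_1,\ldots,x_k]$ denotes the finite continued fraction $\cfrac{1}{x_1+\cfrac{1}{\ddots+\cfrac1{x_k}}}$. Define $c^{(1)}_{a,a+1;b}=[b,a+1,b]$, $c^{(2)}_{a,a+1;b}=[b+1,a]$, $c^{(1)}_{a;b,b+1}=[a,b+1,a]$, $c^{(2)}_{a;b,b+1}=[a+1,b]$. *)

theory Defs
  imports Complex_Main
begin

text \<open>Continuant: K [] = 1, K [a1] = a1, K (xs @ [a, b]) = b * K (xs @ [a]) + K xs.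
  Defined via the equivalent front recursion on the reversed list.\<close>
fun contR :: "real list \<Rightarrow> real" where
  "contR [] = 1"
| "contR [x] = x"
| "contR (x # y # xs) = x * contR (y # xs) + contR xs"

definition cont :: "real list \<Rightarrow> real" where
  "cont xs = contR (rev xs)"

fun cf :: "real list \<Rightarrow> real" where
  "cf [] = 0"
| "cf (x # xs) = 1 / (x + cf xs)"

definition c1_odd :: "nat \<Rightarrow> nat \<Rightarrow> real" where
  "c1_odd a b = cf [real b, real a + 1, real b]"
definition c2_odd :: "nat \<Rightarrow> nat \<Rightarrow> real" where
  "c2_odd a b = cf [real b + 1, real a]"
definition c1_even :: "nat \<Rightarrow> nat \<Rightarrow> real" where
  "c1_even a b = cf [real a, real b + 1, real a]"
definition c2_even :: "nat \<Rightarrow> nat \<Rightarrow> real" where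
  "c2_even a b = cf [real a + 1, real b]"

text \<open>Admissible sequences: (0-based) index i corresponds to position i+1, so
  even list indices are odd positions.\<close>
definition admissible :: "nat \<Rightarrow> nat \<Rightarrow> nat list \<Rightarrow> bool" where
  "admissible a b A \<longleftrightarrow> (\<forall>i < length A.
      (even i \<longrightarrow> A ! i \<in> {a, a + 1}) \<and> (odd i \<longrightarrow> A ! i \<in> {b, b + 1}))"

end

theory Submission
  imports Defs
begin

text \<open>Write [xs] for the continued fraction of xs. The continuant is linear in each entry,
  and expanding around the middle entry gives
  K(P, z, R) = K(P) K(R) (z + [rev P] + [R]), where [rev P] and [R] are the continued
  fractions formed by the entries read outwards from the middle. Hence the ratio in question is
  1 + 1/(z + [rev P] + [R]). On both sides the entries alternate between {b, b+1} and {a, a+1},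
  starting with {b, b+1}; since [y1, y2, ...] is decreasing in y1, increasing in y2 and the tail
  beyond y2 lies in [0, 1/b], each of the two continued fractions lies between
  c2 = [b+1, a] and c1 = [b, a+1, b].\<close>

lemma contR_snoc_snoc: "contR (xs @ [y, z]) = z * contR (xs @ [y]) + contR xs"
  by (induction xs rule: contR.induct) (auto simp: algebra_simps)

lemma contR_rev: "contR (rev xs) = contR xs"
proof (induction xs rule: contR.induct)
  case (3 x y xs)
  have "contR (rev (x # y # xs)) = x * contR (rev (y # xs)) + contR (rev xs)"
    using contR_snoc_snoc[of "rev xs" y x] by simp
  with 3 show ?case by simp
qed auto

lemma cont_eq_contR: "cont = contR"
  by (rule ext) (metis cont_def contR_rev rev_rev_ident)

lemma contR_pos: "\<forall>x\<in>set xs. x > 0 \<Longrightarrow> contR xs > 0"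
  by (induction xs rule: contR.induct) (auto intro!: add_pos_pos)

lemma contR_Cons: "ys \<noteq> [] \<Longrightarrow> contR (x # ys) = x * contR ys + contR (tl ys)"
  by (cases ys) auto

lemma contR_append:
  assumes "xs \<noteq> []" "ys \<noteq> []"
  shows "contR (xs @ ys) = contR xs * contR ys + contR (butlast xs) * contR (tl ys)"
  using assms(1)
proof (induction xs rule: contR.induct)
  case (2 x)
  then show ?case using assms(2) by (simp add: contR_Cons)
next
  case (3 x y xs)
  show ?case
  proof (cases xs)
    case Nil
    then show ?thesis using assms(2) by (cases ys) (auto simp: algebra_simps)
  next
    case (Cons w ws)
    with 3 show ?thesis by (auto simp: algebra_simps)
  qed
qed simp

lemma cf_nonneg: "\<forall>x\<in>set xs. x > 0 \<Longrightarrow> cf xs \<ge> 0"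
  by (induction xs) auto

lemma cf_Cons_le: "\<forall>x\<in>set (y # xs). x > 0 \<Longrightarrow> cf (y # xs) \<le> 1 / y"
  using cf_nonneg[of xs] by (auto intro: frac_le)

lemma cf_eq_contR_tl_div:
  "xs \<noteq> [] \<Longrightarrow> \<forall>x\<in>set xs. x > 0 \<Longrightarrow> cf xs = contR (tl xs) / contR xs"
proof (induction xs rule: contR.induct)
  case (3 x y xs)
  have "contR (y # xs) > 0" "contR xs > 0" using "3.prems"(2) by (auto intro!: contR_pos)
  hence "contR (y # xs) / contR (x # y # xs) = 1 / (x + contR xs / contR (y # xs))"
    by (simp add: field_simps)
  moreover have "cf (y # xs) = contR xs / contR (y # xs)" using 3 by simp
  ultimately show ?case by (simp only: cf.simps(2) list.sel(3))
qed auto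

lemma contR_insert_plus_one_div:
  assumes "xs \<noteq> []" "ys \<noteq> []" "\<forall>x\<in>set xs. x > 0" "\<forall>x\<in>set ys. x > 0" "z > 0"
  shows "contR (xs @ (z + 1) # ys) / contR (xs @ z # ys) = 1 + 1 / (z + cf (rev xs) + cf ys)"
proof -
  have Kxs: "contR xs > 0" and Kys: "contR ys > 0" using assms by (auto intro: contR_pos)
  define u where "u = cf (rev xs)"
  define v where "v = cf ys"
  have "contR (butlast xs) = contR (tl (rev xs))"
    by (metis butlast_rev contR_rev rev_rev_ident)
  hence "u = contR (butlast xs) / contR xs"
    using cf_eq_contR_tl_div[of "rev xs"] assms by (simp add: u_def contR_rev)
  hence u: "contR (butlast xs) = u * contR xs" using Kxs by simp
  have "v = contR (tl ys) / contR ys" using cf_eq_contR_tl_div[of ys] assms by (simp add: v_def)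
  hence v: "contR (tl ys) = v * contR ys" using Kys by simp
  have "u \<ge> 0" "v \<ge> 0" unfolding u_def v_def using assms by (auto intro!: cf_nonneg)
  have K: "contR (xs @ w # ys) = contR xs * contR ys * (w + u + v)" for w
    using assms(1,2) by (simp add: contR_append contR_Cons u v algebra_simps)
  have "contR (xs @ (z + 1) # ys) / contR (xs @ z # ys) = (z + 1 + u + v) / (z + u + v)"
    using Kxs Kys by (simp add: K)
  also have "\<dots> = 1 + 1 / (z + u + v)"
    using \<open>u \<ge> 0\<close> \<open>v \<ge> 0\<close> assms(5) by (simp add: field_simps)
  finally show ?thesis by (simp add: u_def v_def)
qed

lemma admissible_Nil [simp]: "admissible a b []"
  by (simp add: admissible_def)

lemma admissible_Cons [simp]: "admissible a b (x # xs) \<longleftrightarrow> x \<in> {a, a + 1} \<and> admissible b a xs"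
  by (auto simp: admissible_def nth_Cons' less_Suc_eq_0_disj)

lemma admissible_append:
  "admissible a b (xs @ ys) \<longleftrightarrow>
     admissible a b xs \<and> (if even (length xs) then admissible a b ys else admissible b a ys)"
  by (induction xs arbitrary: a b) auto

lemma admissible_rev:
  "admissible a b (rev xs) \<longleftrightarrow> (if odd (length xs) then admissible a b xs else admissible b a xs)"
  by (induction xs arbitrary: a b) (auto simp: admissible_append)

lemma admissible_pos: "0 < a \<Longrightarrow> 0 < b \<Longrightarrow> admissible a b xs \<Longrightarrow> \<forall>x\<in>set xs. 0 < x"
proof (induction xs arbitrary: a b)
  case (Cons x xs)
  have "0 < x" using Cons.prems by auto
  moreover have "\<forall>y\<in>set xs. 0 < y" using Cons.IH[of b a] Cons.prems by simp
  ultimately show ?case by simp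
qed simp

lemma cf_admissible_bounds:
  fixes a b :: nat
  assumes "0 < a" "0 < b" "admissible b a L" "length L \<ge> 2"
  shows "cf [real b + 1, real a] \<le> cf (map real L)"
    and "cf (map real L) \<le> cf [real b, real a + 1, real b]"
proof -
  obtain y1 y2 L' where L: "L = y1 # y2 # L'"
    using assms(4) by (metis One_nat_def Suc_1 Suc_le_length_iff)
  have y1: "b \<le> y1" "y1 \<le> b + 1" and y2: "a \<le> y2" "y2 \<le> a + 1" and "admissible b a L'"
    using assms(3) L by auto
  define t where "t = cf (map real L')"
  have t0: "0 \<le> t"
    unfolding t_def using admissible_pos[OF assms(2,1) \<open>admissible b a L'\<close>] by (auto intro!: cf_nonneg)
  have t1: "t \<le> 1 / b"
  proof (cases L')
    case (Cons w W)
    have "0 < w" "\<forall>x\<in>set W. 0 < x"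
      using Cons admissible_pos[OF assms(2,1) \<open>admissible b a L'\<close>] by auto
    then have "cf (real w # map real W) \<le> 1 / real w" by (intro cf_Cons_le) auto
    moreover have "1 / real w \<le> 1 / real b"
      using Cons \<open>admissible b a L'\<close> assms(2) by (auto intro!: divide_left_mono)
    ultimately show ?thesis by (simp add: t_def Cons)
  qed (simp add: t_def)
  have cfL: "cf (map real L) = 1 / (y1 + 1 / (y2 + t))" using L t_def by simp
  have "1 / (y2 + t) \<le> 1 / a" using y2 t0 assms(1) by (intro divide_left_mono) auto
  hence "y1 + 1 / (y2 + t) \<le> real b + 1 + 1 / a" using y1 by simp
  moreover have "0 < y1 + 1 / (y2 + t)" using y1 y2 t0 assms(1,2) by (intro add_pos_nonneg) auto
  ultimately have "1 / (real b + 1 + 1 / a) \<le> 1 / (y1 + 1 / (y2 + t))"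
    by (intro divide_left_mono) auto
  moreover have "cf [real b + 1, real a] = 1 / (real b + 1 + 1 / a)" by simp
  ultimately show "cf [real b + 1, real a] \<le> cf (map real L)"
    unfolding cfL by simp
  have "1 / (real a + 1 + 1 / b) \<le> 1 / (y2 + t)" using y2 t0 t1 assms(1,2)
    by (intro divide_left_mono) (auto intro!: add_pos_nonneg)
  hence "b + 1 / (real a + 1 + 1 / b) \<le> y1 + 1 / (y2 + t)" using y1 by simp
  moreover have "0 < b + 1 / (real a + 1 + 1 / b)" using assms(1,2) by (simp add: add_pos_pos)
  ultimately have "1 / (y1 + 1 / (y2 + t)) \<le> 1 / (b + 1 / (real a + 1 + 1 / b))"
    by (intro divide_left_mono) auto
  moreover have "cf [real b, real a + 1, real b] = 1 / (b + 1 / (real a + 1 + 1 / b))" by simp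
  ultimately show "cf (map real L) \<le> cf [real b, real a + 1, real b]"
    unfolding cfL by simp
qed

lemma cont_insert_plus_one_div_bounds:
  fixes a b :: nat and P R :: "nat list"
  assumes "0 < a" "0 < b" "admissible b a (rev P)" "admissible b a R" "length P \<ge> 2" "length R \<ge> 2"
  shows "1 + 1 / (real a + 2 * cf [real b, real a + 1, real b])
           \<le> cont (map real P @ [real a + 1] @ map real R) / cont (map real P @ [real a] @ map real R)"
    and "cont (map real P @ [real a + 1] @ map real R) / cont (map real P @ [real a] @ map real R)
           \<le> 1 + 1 / (real a + 2 * cf [real b + 1, real a])"
proof -
  define u where "u = cf (map real (rev P))"
  define v where "v = cf (map real R)"
  define c1 where "c1 = cf [real b, real a + 1, real b]"
  define c2 where "c2 = cf [real b + 1, real a]"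
  have "\<forall>x\<in>set P. 0 < x" "\<forall>x\<in>set R. 0 < x"
    using admissible_pos[OF assms(2,1)] assms(3,4) by auto
  moreover have "map real P \<noteq> []" "map real R \<noteq> []" using assms(5,6) by auto
  ultimately have "contR (map real P @ (real a + 1) # map real R) / contR (map real P @ real a # map real R)
      = 1 + 1 / (a + cf (rev (map real P)) + cf (map real R))"
    using assms(1) by (intro contR_insert_plus_one_div) auto
  then have ratio: "cont (map real P @ [real a + 1] @ map real R) / cont (map real P @ [real a] @ map real R)
      = 1 + 1 / (a + u + v)"
    by (simp add: cont_eq_contR u_def v_def rev_map)
  have "c2 \<le> u" "u \<le> c1" "c2 \<le> v" "v \<le> c1"
    unfolding u_def v_def c1_def c2_def using cf_admissible_bounds assms by auto
  moreover have "0 < c2" using assms(1,2) by (simp add: c2_def add_pos_pos)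
  ultimately have "1 / (a + 2 * c1) \<le> 1 / (a + u + v)" "1 / (a + u + v) \<le> 1 / (a + 2 * c2)"
    by (auto intro!: divide_left_mono)
  then show "1 + 1 / (real a + 2 * cf [real b, real a + 1, real b])
           \<le> cont (map real P @ [real a + 1] @ map real R) / cont (map real P @ [real a] @ map real R)"
    and "cont (map real P @ [real a + 1] @ map real R) / cont (map real P @ [real a] @ map real R)
           \<le> 1 + 1 / (real a + 2 * cf [real b + 1, real a])"
    by (simp_all only: ratio c1_def c2_def add_le_cancel_left)
qed

theorem lemma11:
  fixes a b :: nat and A :: "nat list"
  assumes "0 < a" and "0 < b" and "\<forall>x \<in> set A. 0 < x"
    and "admissible a b A"
  shows "(\<forall>P R. A = P @ [a] @ R \<longrightarrow> even (length P) \<longrightarrow> length P \<ge> 2 \<longrightarrow> length R \<ge> 2 \<longrightarrow>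
            1 + 1 / (real a + 2 * c1_odd a b)
              \<le> cont (map real P @ [real a + 1] @ map real R) / cont (map real P @ [real a] @ map real R)
          \<and> cont (map real P @ [real a + 1] @ map real R) / cont (map real P @ [real a] @ map real R)
              \<le> 1 + 1 / (real a + 2 * c2_odd a b))
       \<and> (\<forall>P R. A = P @ [b] @ R \<longrightarrow> odd (length P) \<longrightarrow> length P \<ge> 2 \<longrightarrow> length R \<ge> 2 \<longrightarrow>
            1 + 1 / (real b + 2 * c1_even a b)
              \<le> cont (map real P @ [real b + 1] @ map real R) / cont (map real P @ [real b] @ map real R)
          \<and> cont (map real P @ [real b + 1] @ map real R) / cont (map real P @ [real b] @ map real R)
              \<le> 1 + 1 / (real b + 2 * c2_even a b))"
proof -
  \<comment> \<open>Positivity of the entries of \<open>A\<close> follows from admissibility.\<close>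
  have odd_position: "admissible b a (rev P) \<and> admissible b a R"
    if "A = P @ [a] @ R" "even (length P)" for P R
    using assms(4) that by (simp add: admissible_append admissible_rev)
  have even_position: "admissible a b (rev P) \<and> admissible a b R"
    if "A = P @ [b] @ R" "odd (length P)" for P R
    using assms(4) that by (simp add: admissible_append admissible_rev)
  show ?thesis
    using cont_insert_plus_one_div_bounds[OF assms(1,2)] cont_insert_plus_one_div_bounds[OF assms(2,1)]
      odd_position even_position
    unfolding c1_odd_def c2_odd_def c1_even_def c2_even_def by blast
qed

end
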